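(* Let $d\ge2$, $u\in(0,\infty)$, and let $R:[-u,u]\to[0,\infty)$ be continuous and symmetric ($R(-s)=R(s)$). Let $$K=\Big\{(x_1,\dots,x_d)\in\mathbb{R}^d: x_1\in[-u,u],\ \sum_{i=2}^dx_i^2\le R(x_1)^2\Big\},$$ and assume there exist $x_K\in K$ and $r_K>0$ with $B^d(x_K,r_K)\subset K$. Then there is a constant $c_K\in(0,\infty)$ depending only on $K$ and $d$ such that $$\mathrm{vol}(K\setminus(\varrho K+x))\ge c_K\|x\|$$ for all rotations $\varrho$ of $\mathbb{R}^d$ and all $x\in\mathbb{R}^d$ with $K\cap(\varrho K+x)\ne\varnothing$.
   Context: $B^d(x,r)$ is the closed Euclidean ball of radius $r$ centred at $x$; a rotation is an element of $SO(d)$ acting linearly on $\mathbb{R}^d$. *)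

theory Defs
  imports "HOL-Analysis.Analysis"
begin

definition rotation_matrix :: "real^'n^'n \<Rightarrow> bool" where
  "rotation_matrix Q \<longleftrightarrow> orthogonal_matrix Q \<and> det Q = 1"

definition rev_body :: "'n::finite \<Rightarrow> real \<Rightarrow> (real \<Rightarrow> real) \<Rightarrow> (real^'n) set" where
  "rev_body e u R = {x. x $ e \<in> {-u..u} \<and> (\<Sum>i\<in>UNIV - {e}. (x $ i)^2) \<le> (R (x $ e))^2}"

end

theory Submission
  imports Defs
begin

text \<open>
  Only three properties of the body K are used: it is compact, centrally symmetric and
  has positive volume.
  Put L = \<rho>K + x, let v be the unit vector in direction x and choose r with
  K \<subseteq> B(0, r). By symmetry the first moment of K in direction v vanishes, while
  the rigid motion y \<mapsto> \<rho>y + x preserves Lebesgue measure, so the first moment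
  of L is \<parallel>x\<parallel> vol K. The difference of the two moments is an integral over L - K
  minus one over K - L; these sets have equal volume, and \<langle>y, v\<rangle> is at most
  r + \<parallel>x\<parallel> on the first and at least -r on the second. Hence
  \<parallel>x\<parallel> vol K \<le> (2r + \<parallel>x\<parallel>) vol (K - L), and \<parallel>x\<parallel> \<le> 2r as soon as K and L meet.
\<close>

lemma borel_measurable_linear:
  fixes f :: "'a::euclidean_space \<Rightarrow> 'b::euclidean_space"
  shows "linear f \<Longrightarrow> f \<in> borel_measurable borel"
  by (simp add: linear_continuous_on linear_conv_bounded_linear borel_measurable_continuous_onI)

lemma emeasure_lborel_box_cart:
  fixes l u :: "real^'n::finite"
  assumes "\<And>i. l $ i \<le> u $ i"
  shows "emeasure lborel (box l u) = (\<Prod>i\<in>UNIV. u $ i - l $ i)"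
proof -
  have Basis_le: "\<forall>b\<in>Basis. l \<bullet> b \<le> u \<bullet> b"
    using assms by (auto simp: Basis_vec_def cart_eq_inner_axis)
  have "l \<in> cbox l u" using assms by (simp add: mem_box_cart)
  then have "measure lborel (cbox l u) = (\<Prod>i\<in>UNIV. u $ i - l $ i)"
    by (intro content_cbox_cart) blast
  moreover have "measure lborel (cbox l u) = (\<Prod>b\<in>Basis. (u - l) \<bullet> b)"
    using Basis_le by (simp add: content_cbox inner_diff_left)
  ultimately show ?thesis
    using Basis_le by (simp add: emeasure_lborel_box_eq)
qed

lemma lborel_distr_vec_reindex:
  fixes h :: "'a::finite \<Rightarrow> 'b::finite"
  assumes h: "bij h"
  shows "distr lborel borel (\<lambda>v::real^'b. \<chi> i. v $ h i) = (lborel :: (real^'a) measure)"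
proof (rule lborel_eqI[symmetric])
  let ?F = "\<lambda>v::real^'b. (\<chi> i. v $ h i) :: real^'a"
  have meas: "?F \<in> borel_measurable borel"
    by (rule borel_measurable_linear) (auto intro!: linearI simp: vec_eq_iff)
  fix l u :: "real^'a"
  assume Basis_le: "\<And>b. b \<in> Basis \<Longrightarrow> l \<bullet> b \<le> u \<bullet> b"
  have le: "l $ i \<le> u $ i" for i
    using Basis_le[of "axis i 1"] by (auto simp: Basis_vec_def cart_eq_inner_axis)
  have "?F -` box l u = box (\<chi> j. l $ inv h j) (\<chi> j. u $ inv h j)"
    using h by (auto simp: mem_box_cart bij_inv_eq_iff) (metis bij_inv_eq_iff h)+
  then have "emeasure (distr lborel borel ?F) (box l u) = (\<Prod>j\<in>UNIV. u $ inv h j - l $ inv h j)"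
    by (simp add: emeasure_distr meas emeasure_lborel_box_cart le)
  also have "\<dots> = (\<Prod>i\<in>UNIV. u $ i - l $ i)"
    using prod.reindex_bij_betw[of "inv h" UNIV UNIV "\<lambda>i. u $ i - l $ i"] h
    by (simp add: bij_imp_bij_inv)
  also have "\<dots> = emeasure lborel (box l u)"
    by (simp add: emeasure_lborel_box_cart le)
  finally show "emeasure (distr lborel borel ?F) (box l u) = (\<Prod>b\<in>Basis. (u - l) \<bullet> b)"
    using le by (simp add: emeasure_lborel_box_eq Basis_vec_def cart_eq_inner_axis)
qed simp

lemma inner_vec_reindex:
  fixes h :: "'a::finite \<Rightarrow> 'b::finite"
  assumes "bij h"
  shows "(\<chi> i. v $ h i) \<bullet> ((\<chi> i. w $ h i) :: real^'a) = v \<bullet> w"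
  using sum.reindex_bij_betw[of h UNIV UNIV "\<lambda>j. v $ j * w $ j"] assms
  by (simp add: inner_vec_def)

lemma lborel_distr_orthogonal_wellorder:
  fixes f :: "real^'n::{finite,wellorder} \<Rightarrow> real^'n::_"
  assumes f: "orthogonal_transformation f"
  shows "distr lborel borel f = lborel"
proof (rule lborel_eqI[symmetric])
  have meas: "f \<in> borel_measurable borel"
    using f orthogonal_transformation_linear borel_measurable_linear by blast
  fix l u :: "real^'n::{finite,wellorder}"
  let ?B = "box l u"
  assume "\<And>b. b \<in> Basis \<Longrightarrow> l \<bullet> b \<le> u \<bullet> b"
  then have "(\<Prod>b\<in>Basis. (u - l) \<bullet> b) = emeasure lborel ?B"
    by (simp add: emeasure_lborel_box_eq)
  also have "\<dots> = measure lebesgue ?B"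
    by (simp add: emeasure_eq_measure2)
  also have "\<dots> = measure lebesgue (inv f ` ?B)"
    by (simp add: measure_orthogonal_image[OF orthogonal_transformation_inv[OF f]])
  also have "\<dots> = emeasure lebesgue (inv f ` ?B)"
    by (rule emeasure_eq_measure2[symmetric], rule measurable_orthogonal_image)
      (simp_all add: orthogonal_transformation_inv f)
  also have "inv f ` ?B = f -` ?B"
    using f orthogonal_transformation_bij bij_vimage_eq_inv_image by metis
  also have "emeasure lebesgue (f -` ?B) = emeasure (distr lborel borel f) ?B"
    using meas by (simp add: emeasure_distr measurable_sets_borel)
  finally show "emeasure (distr lborel borel f) ?B = (\<Prod>b\<in>Basis. (u - l) \<bullet> b)" ..
qed simp

text \<open>
  The library proves invariance of Lebesgue measure under orthogonal maps only for index types
  that are also well-ordered. A copy of a countable index type, ordered through \<^const>\<open>to_nat\<close>,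
  transfers it to arbitrary finite index types by reindexing coordinates.
\<close>

typedef 'a ranked = "UNIV :: 'a set" by simp

instance ranked :: (finite) finite
proof
  show "finite (UNIV :: 'a ranked set)"
    by (metis type_definition.Abs_image[OF type_definition_ranked] finite_imageI finite)
qed

instantiation ranked :: (countable) linorder
begin

definition less_eq_ranked :: "'a ranked \<Rightarrow> 'a ranked \<Rightarrow> bool" where
  "x \<le> y \<longleftrightarrow> to_nat (Rep_ranked x) \<le> to_nat (Rep_ranked y)"

definition less_ranked :: "'a ranked \<Rightarrow> 'a ranked \<Rightarrow> bool" where
  "x < y \<longleftrightarrow> to_nat (Rep_ranked x) < to_nat (Rep_ranked y)"

instance
proof
  fix x y z :: "'a ranked"
  show "x < y \<longleftrightarrow> x \<le> y \<and> \<not> y \<le> x"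
    by (auto simp: less_eq_ranked_def less_ranked_def)
  show "x \<le> x" by (simp add: less_eq_ranked_def)
  show "x \<le> y \<Longrightarrow> y \<le> z \<Longrightarrow> x \<le> z" by (simp add: less_eq_ranked_def)
  show "x \<le> y \<Longrightarrow> y \<le> x \<Longrightarrow> x = y"
    by (simp add: less_eq_ranked_def Rep_ranked_inject[symmetric])
  show "x \<le> y \<or> y \<le> x" by (auto simp: less_eq_ranked_def)
qed

end

instance ranked :: (countable) wellorder
proof
  fix P :: "'a ranked \<Rightarrow> bool" and a :: "'a ranked"
  assume step: "\<And>x. (\<And>y. y < x \<Longrightarrow> P y) \<Longrightarrow> P x"
  show "P a"
  proof (induction a rule: measure_induct_rule[of "\<lambda>x. to_nat (Rep_ranked x)"])
    case (less x)
    show ?case by (rule step, rule less) (simp add: less_ranked_def)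
  qed
qed

lemma lborel_distr_orthogonal:
  fixes f :: "real^'n::finite \<Rightarrow> real^'n"
  assumes f: "orthogonal_transformation f"
  shows "distr lborel borel f = lborel"
proof -
  define \<phi> where "\<phi> = (\<lambda>v::real^'n. (\<chi> i. v $ Rep_ranked i) :: real^'n ranked)"
  define \<psi> where "\<psi> = (\<lambda>w::real^'n ranked. (\<chi> j. w $ Abs_ranked j) :: real^'n)"
  have bij_Rep: "bij (Rep_ranked :: 'n ranked \<Rightarrow> 'n)"
    by (rule o_bij[of Abs_ranked]) (simp_all add: fun_eq_iff Rep_ranked_inverse Abs_ranked_inverse)
  have bij_Abs: "bij (Abs_ranked :: 'n \<Rightarrow> 'n ranked)"
    by (rule o_bij[of Rep_ranked]) (simp_all add: fun_eq_iff Rep_ranked_inverse Abs_ranked_inverse)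
  have \<psi>_\<phi>: "\<psi> (\<phi> v) = v" for v
    by (simp add: \<phi>_def \<psi>_def vec_eq_iff Abs_ranked_inverse)
  have \<phi>_\<psi>: "\<phi> (\<psi> w) = w" for w
    by (simp add: \<phi>_def \<psi>_def vec_eq_iff Rep_ranked_inverse)
  have "linear \<phi>" "linear \<psi>"
    unfolding \<phi>_def \<psi>_def by (auto intro!: linearI simp: vec_eq_iff)
  then have meas: "\<phi> \<in> borel_measurable borel" "\<psi> \<in> borel_measurable borel"
    by (simp_all add: borel_measurable_linear)
  let ?g = "\<phi> \<circ> f \<circ> \<psi>"
  have "orthogonal_transformation ?g"
    unfolding orthogonal_transformation_def
  proof (intro conjI allI)
    show "linear ?g"
      using \<open>linear \<phi>\<close> \<open>linear \<psi>\<close> f orthogonal_transformation_linear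
      by (blast intro: linear_compose)
    have "\<psi> v \<bullet> \<psi> w = v \<bullet> w" for v w
      using inner_vec_reindex[OF bij_Rep, of "\<psi> v" "\<psi> w"]
      by (simp add: \<phi>_\<psi>[unfolded \<phi>_def])
    then show "?g v \<bullet> ?g w = v \<bullet> w" for v w
      using f by (simp add: \<phi>_def inner_vec_reindex[OF bij_Rep] orthogonal_transformation_def)
  qed
  then have g: "distr lborel borel ?g = lborel" and g_meas: "?g \<in> borel_measurable borel"
    using lborel_distr_orthogonal_wellorder orthogonal_transformation_linear borel_measurable_linear
    by blast+
  have "\<psi> \<circ> (?g \<circ> \<phi>) = f"
    by (simp add: fun_eq_iff \<psi>_\<phi>)
  then have "distr lborel borel f = distr lborel borel (\<psi> \<circ> (?g \<circ> \<phi>))"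
    by simp
  also have "\<dots> = distr (distr (distr lborel borel \<phi>) borel ?g) borel \<psi>"
    using meas g_meas by (simp add: distr_distr measurable_comp)
  also have "\<dots> = lborel"
    by (simp add: \<phi>_def \<psi>_def lborel_distr_vec_reindex bij_Rep bij_Abs g[unfolded \<phi>_def \<psi>_def])
  finally show ?thesis .
qed

lemma
  fixes f :: "real^'n::finite \<Rightarrow> real^'n"
  assumes f: "orthogonal_transformation f"
  shows borel_measurable_orthogonal_plus: "(\<lambda>y. f y + x) \<in> borel_measurable borel"
    and lborel_distr_orthogonal_plus: "distr lborel borel (\<lambda>y. f y + x) = lborel"
    and inj_orthogonal_plus: "inj (\<lambda>y. f y + x)"
    and compact_orthogonal_plus_image: "compact K \<Longrightarrow> compact ((\<lambda>y. f y + x) ` K)"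
proof -
  have lin: "linear f"
    using f orthogonal_transformation_linear by blast
  then have f_meas: "f \<in> borel_measurable borel"
    by (rule borel_measurable_linear)
  then show "(\<lambda>y. f y + x) \<in> borel_measurable borel"
    by simp
  have "(\<lambda>y. f y + x) = (+) x \<circ> f"
    by (simp add: fun_eq_iff add.commute)
  then have "distr lborel borel (\<lambda>y. f y + x) = distr (distr lborel borel f) borel ((+) x)"
    using f_meas by (simp add: distr_distr)
  then show "distr lborel borel (\<lambda>y. f y + x) = lborel"
    by (simp add: lborel_distr_orthogonal[OF f] lborel_distr_plus)
  show "inj (\<lambda>y. f y + x)"
    using orthogonal_transformation_inj[OF f] by (auto simp: inj_def)
  show "compact ((\<lambda>y. f y + x) ` K)" if "compact K"
    using that lin by (intro compact_continuous_image continuous_intros linear_continuous_on)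
      (simp add: linear_conv_bounded_linear)
qed

lemma
  fixes T :: "'a::euclidean_space \<Rightarrow> 'a" and g :: "'a \<Rightarrow> real"
  assumes T: "T \<in> borel_measurable borel" "distr lborel borel T = lborel" "inj T"
    and K: "T ` K \<in> sets borel"
  shows measure_lborel_image_eq: "measure lborel (T ` K) = measure lborel K"
    and set_integral_lborel_image_eq:
      "g \<in> borel_measurable borel \<Longrightarrow> (LINT y:T ` K|lborel. g y) = (LINT y:K|lborel. g (T y))"
proof -
  have "measure lborel (T ` K) = measure (distr lborel borel T) (T ` K)"
    using T by simp
  also have "\<dots> = measure lborel (T -` (T ` K) \<inter> space lborel)"
    using T(1) K by (intro measure_distr) simp_all
  also have "\<dots> = measure lborel K"
    using T(3) by (simp add: inj_vimage_image_eq)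
  finally show "measure lborel (T ` K) = measure lborel K" .
  have ind: "indicator (T ` K) (T y) = (indicator K y :: real)" for y
    using \<open>inj T\<close> by (simp add: indicator_def inj_image_mem_iff)
  assume g: "g \<in> borel_measurable borel"
  have "(LINT y:T ` K|lborel. g y) = (LINT y|distr lborel borel T. indicator (T ` K) y *\<^sub>R g y)"
    unfolding set_lebesgue_integral_def using T by simp
  also have "\<dots> = (LINT y|lborel. indicator (T ` K) (T y) *\<^sub>R g (T y))"
    by (rule integral_distr) (use T(1) K g in auto)
  finally show "(LINT y:T ` K|lborel. g y) = (LINT y:K|lborel. g (T y))"
    by (simp add: set_lebesgue_integral_def ind)
qed

lemma set_integral_odd_eq_0:
  fixes g :: "'a::euclidean_space \<Rightarrow> real"
  assumes K: "K \<in> sets borel" "\<And>y. y \<in> K \<Longrightarrow> -y \<in> K"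
    and g: "g \<in> borel_measurable borel" "\<And>y. g (-y) = - g y"
  shows "(LINT y:K|lborel. g y) = 0"
proof -
  have "distr lborel borel uminus = (lborel :: 'a measure)"
    using lborel_affine[of "-1" "0 :: 'a"] by (simp add: density_1)
  moreover have "uminus ` K = K"
    using K(2) by (force simp: image_iff)
  ultimately have "(LINT y:K|lborel. g y) = (LINT y:K|lborel. g (- y))"
    using set_integral_lborel_image_eq[of uminus K g] K g by simp
  then show ?thesis
    using g(2) by (simp add: set_lebesgue_integral_def)
qed

lemma set_integral_diff_le_measure_Diff:
  fixes g :: "'a \<Rightarrow> real"
  assumes K: "K \<in> fmeasurable M" and L: "L \<in> fmeasurable M"
    and same_measure: "measure M L = measure M K"
    and int: "set_integrable M K g" "set_integrable M L g"
    and lower: "\<And>y. y \<in> K \<Longrightarrow> -a \<le> g y"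
    and upper: "\<And>y. y \<in> L \<Longrightarrow> g y \<le> b"
  shows "(LINT y:L|M. g y) - (LINT y:K|M. g y) \<le> (a + b) * measure M (K - L)"
proof -
  have split: "(LINT y:A|M. g y) = (LINT y:A \<inter> B|M. g y) + (LINT y:A - B|M. g y)"
    if "set_integrable M A g" "A \<in> sets M" "B \<in> sets M" for A B
  proof -
    have "set_integrable M (A \<inter> B) g" "set_integrable M (A - B) g"
      using that by (auto intro: set_integrable_subset)
    then have "(LINT y:(A \<inter> B) \<union> (A - B)|M. g y)
        = (LINT y:A \<inter> B|M. g y) + (LINT y:A - B|M. g y)"
      by (intro set_integral_Un) auto
    moreover have "(A \<inter> B) \<union> (A - B) = A" by blast
    ultimately show ?thesis by simp
  qed
  have const: "set_integrable M A (\<lambda>_. c)" "(LINT y:A|M. c) = c * measure M A"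
    if "A \<in> fmeasurable M" for A and c :: real
    using that by (auto simp: set_integrable_def set_integral_const fmeasurable_def)
  have "measure M K + measure M (L - K) = measure M L + measure M (K - L)"
    using measure_Un2[OF K L] measure_Un2[OF L K] by (simp add: Un_commute)
  then have same_Diff: "measure M (L - K) = measure M (K - L)"
    using same_measure by simp
  have "(LINT y:L - K|M. g y) \<le> (LINT y:L - K|M. b)"
    using int(2) K L upper const(1)[of "L - K"]
    by (intro set_integral_mono) (auto intro: set_integrable_subset)
  also have "\<dots> = b * measure M (K - L)"
    using const(2)[of "L - K"] K L same_Diff by (simp add: fmeasurable.Diff)
  finally have L_part: "(LINT y:L - K|M. g y) \<le> b * measure M (K - L)" .
  have "(LINT y:K - L|M. -a) \<le> (LINT y:K - L|M. g y)"
    using int(1) K L lower const(1)[of "K - L"]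
    by (intro set_integral_mono) (auto intro: set_integrable_subset)
  moreover have "(LINT y:K - L|M. -a) = - a * measure M (K - L)"
    using const(2)[of "K - L"] K L by (simp add: fmeasurable.Diff)
  ultimately have K_part: "- (LINT y:K - L|M. g y) \<le> a * measure M (K - L)"
    by simp
  show ?thesis
    using split[OF int(2), of K] split[OF int(1), of L] K L L_part K_part
    by (simp add: Int_commute algebra_simps fmeasurableD)
qed

lemma set_integral_inner_rigid_image:
  fixes f :: "real^'n::finite \<Rightarrow> real^'n"
  assumes K: "compact K" "\<And>y. y \<in> K \<Longrightarrow> -y \<in> K" and f: "orthogonal_transformation f"
  shows "(LINT y:(\<lambda>y. f y + x) ` K|lborel. y \<bullet> v) = (x \<bullet> v) * measure lborel K"
proof -
  have lin: "linear f"
    using f orthogonal_transformation_linear by blast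
  have "(LINT y:(\<lambda>y. f y + x) ` K|lborel. y \<bullet> v)
      = (LINT y:K|lborel. y \<bullet> adjoint f v + x \<bullet> v)"
    using K(1) borel_measurable_orthogonal_plus[OF f] lborel_distr_orthogonal_plus[OF f]
      inj_orthogonal_plus[OF f] compact_orthogonal_plus_image[OF f]
    by (simp add: set_integral_lborel_image_eq borel_compact inner_add_left adjoint_works[OF lin])
  also have "\<dots> = (LINT y:K|lborel. y \<bullet> adjoint f v) + (LINT y:K|lborel. x \<bullet> v)"
  proof (rule set_integral_add(2))
    show "set_integrable lborel K (\<lambda>y. y \<bullet> adjoint f v)"
      and "set_integrable lborel K (\<lambda>y. x \<bullet> v)"
      unfolding set_integrable_def using K(1)
      by (rule borel_integrable_compact, intro continuous_intros)+
  qed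
  also have "(LINT y:K|lborel. y \<bullet> adjoint f v) = 0"
    using K by (intro set_integral_odd_eq_0) (auto simp: borel_compact)
  also have "(LINT y:K|lborel. x \<bullet> v) = measure lborel K * (x \<bullet> v)"
    using set_integral_const[of K lborel "x \<bullet> v"] fmeasurable_compact[OF K(1)]
    by (simp add: fmeasurableD2 borel_compact[OF K(1)])
  finally show ?thesis by simp
qed

lemma measure_Diff_rigid_image_ge:
  fixes K :: "(real^'n::finite) set" and f :: "real^'n \<Rightarrow> real^'n"
  assumes K: "compact K" "\<And>y. y \<in> K \<Longrightarrow> -y \<in> K"
    "\<And>y. y \<in> K \<Longrightarrow> norm y \<le> r"
    and f: "orthogonal_transformation f"
    and meet: "K \<inter> (\<lambda>y. f y + x) ` K \<noteq> {}"
  shows "measure lborel K * norm x \<le> 4 * r * measure lborel (K - (\<lambda>y. f y + x) ` K)"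
proof -
  define L where "L = (\<lambda>y. f y + x) ` K"
  have norm_f: "norm (f y) = norm y" for y
    using f by (simp add: orthogonal_transformation_norm)
  have "norm x \<le> 2 * r"
  proof -
    obtain y where "y \<in> K" "f y + x \<in> K"
      using meet by auto
    then have "norm (f y + x) \<le> r" "norm (f y) \<le> r"
      using K(3) norm_f by auto
    then show ?thesis
      using norm_triangle_ineq4[of "f y + x" "f y"] by simp
  qed
  have "compact L"
    unfolding L_def using K(1) by (rule compact_orthogonal_plus_image[OF f])
  then have L_meas: "L \<in> fmeasurable lborel" "measure lborel L = measure lborel K"
    using borel_measurable_orthogonal_plus[OF f] lborel_distr_orthogonal_plus[OF f]
      inj_orthogonal_plus[OF f]
    by (auto simp: fmeasurable_compact L_def borel_compact measure_lborel_image_eq)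
  \<comment> \<open>sgn instead of division by norm x, so that x = 0 needs no separate case\<close>
  define v where "v = sgn x"
  have inner_v: "\<bar>y \<bullet> v\<bar> \<le> norm y" for y
    using Cauchy_Schwarz_ineq2[of y v] by (cases "x = 0") (auto simp: v_def norm_sgn)
  have int: "set_integrable lborel S (\<lambda>y. y \<bullet> v)" if "compact S" for S
    unfolding set_integrable_def using that
    by (rule borel_integrable_compact) (intro continuous_intros)
  have "x \<bullet> v = norm x"
    by (cases "x = 0") (simp_all add: v_def sgn_div_norm dot_square_norm power2_eq_square)
  then have "norm x * measure lborel K = (LINT y:L|lborel. y \<bullet> v) - (LINT y:K|lborel. y \<bullet> v)"
    using set_integral_inner_rigid_image[OF K(1,2) f] set_integral_odd_eq_0[of K "\<lambda>y. y \<bullet> v"] K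
    by (simp add: L_def borel_compact)
  also have "\<dots> \<le> (r + (r + norm x)) * measure lborel (K - L)"
  proof (rule set_integral_diff_le_measure_Diff)
    show "y \<in> K \<Longrightarrow> - r \<le> y \<bullet> v" for y
      using inner_v[of y] K(3)[of y] by linarith
    fix y
    assume "y \<in> L"
    then obtain z where z: "z \<in> K" "y = f z + x"
      unfolding L_def by blast
    have "norm (f z + x) \<le> norm (f z) + norm x"
      by (rule norm_triangle_ineq)
    then have "norm y \<le> r + norm x"
      using z K(3)[of z] norm_f[of z] by simp
    then show "y \<bullet> v \<le> r + norm x"
      using inner_v[of y] by linarith
  qed (use K(1) \<open>compact L\<close> L_meas int in \<open>auto simp: fmeasurable_compact\<close>)
  also have "\<dots> \<le> 4 * r * measure lborel (K - L)"
    using \<open>norm x \<le> 2 * r\<close> by (intro mult_right_mono) auto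
  finally show ?thesis
    by (simp add: L_def mult.commute)
qed

lemma compact_rev_body:
  assumes R: "continuous_on {-u..u} R"
  shows "compact (rev_body e u R)"
proof -
  obtain M where M: "\<forall>s\<in>{-u..u}. \<bar>R s\<bar> \<le> M"
    using compact_imp_bounded[OF compact_continuous_image[OF R compact_Icc]]
    by (auto simp: bounded_iff)
  have "norm y \<le> sqrt (u\<^sup>2 + M\<^sup>2)" if y: "y \<in> rev_body e u R" for y
  proof (rule real_le_rsqrt)
    have "(norm y)\<^sup>2 = (\<Sum>i\<in>UNIV. (y $ i)\<^sup>2)"
      unfolding power2_norm_eq_inner inner_vec_def by (simp add: power2_eq_square)
    also have "\<dots> = (y $ e)\<^sup>2 + (\<Sum>i\<in>UNIV - {e}. (y $ i)\<^sup>2)"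
      by (rule sum.remove) simp_all
    also have "\<dots> \<le> u\<^sup>2 + M\<^sup>2"
    proof (rule add_mono)
      show "(y $ e)\<^sup>2 \<le> u\<^sup>2"
        using y by (auto simp: rev_body_def abs_le_square_iff[symmetric])
      have "\<bar>R (y $ e)\<bar> \<le> M"
        using M y by (auto simp: rev_body_def)
      then have "(R (y $ e))\<^sup>2 \<le> M\<^sup>2"
        using power_mono[of "\<bar>R (y $ e)\<bar>" M 2] by simp
      then show "(\<Sum>i\<in>UNIV - {e}. (y $ i)\<^sup>2) \<le> M\<^sup>2"
        using y by (auto simp: rev_body_def)
    qed
    finally show "(norm y)\<^sup>2 \<le> u\<^sup>2 + M\<^sup>2" .
  qed
  then have "bounded (rev_body e u R)"
    by (auto simp: bounded_iff)
  moreover have "closed (rev_body e u R)"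
  proof -
    let ?S = "{y::real^'a. -u \<le> y $ e \<and> y $ e \<le> u}"
    have "rev_body e u R = {y \<in> ?S. (\<Sum>i\<in>UNIV - {e}. (y $ i)\<^sup>2) \<le> (R (y $ e))\<^sup>2}"
      by (auto simp: rev_body_def)
    moreover have "closed {y \<in> ?S. (\<Sum>i\<in>UNIV - {e}. (y $ i)\<^sup>2) \<le> (R (y $ e))\<^sup>2}"
    proof (rule continuous_on_closed_Collect_le)
      show "closed ?S"
        by (intro closed_Collect_conj closed_Collect_le continuous_intros)
      show "continuous_on ?S (\<lambda>y. \<Sum>i\<in>UNIV - {e}. (y $ i)\<^sup>2)"
        by (intro continuous_intros)
      have "continuous_on ?S (\<lambda>y. R (y $ e))"
        by (rule continuous_on_compose2[OF R]) (auto intro!: continuous_intros)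
      then show "continuous_on ?S (\<lambda>y. (R (y $ e))\<^sup>2)"
        by (intro continuous_intros)
    qed
    ultimately show ?thesis
      by simp
  qed
  ultimately show ?thesis
    by (simp add: compact_eq_bounded_closed)
qed

lemma uminus_in_rev_body:
  assumes "\<And>s. s \<in> {-u..u} \<Longrightarrow> R (-s) = R s" and "y \<in> rev_body e u R"
  shows "-y \<in> rev_body e u R"
  using assms by (auto simp: rev_body_def)

theorem proposition4p3:
  fixes e :: "'n::finite" and u :: real and R :: "real \<Rightarrow> real"
    and xK :: "real^'n" and rK :: real
  assumes "CARD('n) \<ge> 2"
    and "u > 0"
    and "continuous_on {-u..u} R"
    and "\<And>s. s \<in> {-u..u} \<Longrightarrow> R s \<ge> 0"
    and "\<And>s. s \<in> {-u..u} \<Longrightarrow> R (-s) = R s"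
    and "xK \<in> rev_body e u R" and "rK > 0"
    and "cball xK rK \<subseteq> rev_body e u R"
  shows "\<exists>c>0. \<forall>Q x. rotation_matrix Q \<longrightarrow>
           rev_body e u R \<inter> (\<lambda>y. Q *v y + x) ` rev_body e u R \<noteq> {} \<longrightarrow>
           measure lebesgue (rev_body e u R - (\<lambda>y. Q *v y + x) ` rev_body e u R) \<ge> c * norm x"
proof -
  let ?K = "rev_body e u R"
  have K: "compact ?K" "\<And>y. y \<in> ?K \<Longrightarrow> -y \<in> ?K"
    using compact_rev_body[OF assms(3)] uminus_in_rev_body[of u R, OF assms(5)] by auto
  obtain r where r: "r > 0" "\<And>y. y \<in> ?K \<Longrightarrow> norm y \<le> r"
    using compact_imp_bounded[OF K(1)] by (auto simp: bounded_pos)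
  have "0 < measure lborel (cball xK rK)"
    using \<open>rK > 0\<close> by (rule content_cball_pos)
  also have "\<dots> \<le> measure lborel ?K"
    using assms(8) K(1) by (intro measure_mono_fmeasurable) (auto simp: fmeasurable_compact)
  finally have "measure lborel ?K > 0" .
  show ?thesis
  proof (intro exI[of _ "measure lborel ?K / (4 * r)"] conjI allI impI)
    fix Q :: "real^'n^'n" and x :: "real^'n"
    assume "rotation_matrix Q" and meet: "?K \<inter> (\<lambda>y. Q *v y + x) ` ?K \<noteq> {}"
    then have orthogonal: "orthogonal_transformation ((*v) Q)"
      by (simp add: rotation_matrix_def orthogonal_transformation_matrix matrix_of_matrix_vector_mul)
    from measure_Diff_rigid_image_ge[OF K r(2) orthogonal meet]
    have "measure lborel ?K / (4 * r) * norm x \<le> measure lborel (?K - (\<lambda>y. Q *v y + x) ` ?K)"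
      using r(1) by (simp add: field_simps)
    moreover have "compact ((\<lambda>y. Q *v y + x) ` ?K)"
      using K(1) by (rule compact_orthogonal_plus_image[OF orthogonal])
    ultimately show "measure lebesgue (?K - (\<lambda>y. Q *v y + x) ` ?K)
        \<ge> measure lborel ?K / (4 * r) * norm x"
      using K(1) by (simp add: borel_compact sets.Diff)
  qed (use \<open>measure lborel ?K > 0\<close> r(1) in simp)
qed

end
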